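(* Let $r\ge1$, $\mathbf{m}\in\mathbb{N}^r$, $m=m_1+\cdots+m_r$, $\mathbf{f}\in\mathbb{C}^r$ and $a,b,c\in\mathbb{C}$ with $(c-a-m)_{m}\ne0$, $(c-b-m)_{m}\ne0$, $(1+a+b-c)_m\ne0$. Put $C_{k,r}=\frac{(-1)^k}{k!}{}_{r+1}F_{r}\!\left(\begin{matrix}-k,\mathbf{f}+\mathbf{m}\\\mathbf{f}\end{matrix}\right)$ and $$ \hat{Q}_m(t)=\sum_{k=0}^{m}\frac{(-1)^kC_{k,r}(a)_k(b)_k(t)_k}{(c-a-m)_k(c-b-m)_k}\, {}_{3}F_{2}\!\left(\begin{matrix}-m+k,\,t+k,\,c-a-b-m\\ c-a-m+k,\,c-b-m+k\end{matrix}\right), $$ $$ \hat{P}_m(t)=\sum_{k=0}^m\frac{(-1)^k(a)_k(-b-m)_k(t)_k(c-a-m-t)_{m-k}}{(c-a-m)_m(c-b-m)_k\,k!}\, {}_{r+2}F_{r+1}\!\left(\begin{matrix}-k,b,\mathbf{f}+\mathbf{m}\\ b+m-k+1,\mathbf{f}\end{matrix}\right). $$ Then $\hat{Q}_m(t)=\hat{P}_m(t)$ identically in $t$.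
   Context: $(a)_k=\Gamma(a+k)/\Gamma(a)$. $\mathbf{f}+\mathbf{m}$ is componentwise; a vector among hypergeometric parameters means its components are listed. ${}_pF_q(\mathbf{a};\mathbf{b})$ denotes the terminating generalized hypergeometric series at argument $1$. *)

theory Defs
  imports Complex_Main
begin

text \<open>In the statement N is always the termination index n of a numerator
  parameter -n, so all further terms vanish and this is the usual
  terminating series pFq(as; bs).\<close>
definition hyp_term :: "complex list \<Rightarrow> complex list \<Rightarrow> nat \<Rightarrow> complex" where
  "hyp_term as bs N =
     (\<Sum>j\<le>N. prod_list (map (\<lambda>x. pochhammer x j) as)
              / prod_list (map (\<lambda>x. pochhammer x j) bs) / fact j)"

definition Ccoef :: "nat \<Rightarrow> (nat \<Rightarrow> complex) \<Rightarrow> (nat \<Rightarrow> nat) \<Rightarrow> nat \<Rightarrow> complex" where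
  "Ccoef r f mm k =
     (-1) ^ k / fact k *
     hyp_term ((- of_nat k) # map (\<lambda>i. f i + of_nat (mm i)) [0..<r])
              (map f [0..<r]) k"

definition Qhat :: "nat \<Rightarrow> (nat \<Rightarrow> complex) \<Rightarrow> (nat \<Rightarrow> nat) \<Rightarrow> complex \<Rightarrow> complex \<Rightarrow> complex \<Rightarrow> complex \<Rightarrow> complex" where
  "Qhat r f mm a b c t =
    (let m = (\<Sum>i<r. mm i) in
     \<Sum>k\<le>m. (-1) ^ k * Ccoef r f mm k * pochhammer a k * pochhammer b k * pochhammer t k
            / (pochhammer (c - a - of_nat m) k * pochhammer (c - b - of_nat m) k)
            * hyp_term [- of_nat m + of_nat k, t + of_nat k, c - a - b - of_nat m]
                       [c - a - of_nat m + of_nat k, c - b - of_nat m + of_nat k] (m - k))"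

definition Phat :: "nat \<Rightarrow> (nat \<Rightarrow> complex) \<Rightarrow> (nat \<Rightarrow> nat) \<Rightarrow> complex \<Rightarrow> complex \<Rightarrow> complex \<Rightarrow> complex \<Rightarrow> complex" where
  "Phat r f mm a b c t =
    (let m = (\<Sum>i<r. mm i) in
     \<Sum>k\<le>m. (-1) ^ k * pochhammer a k * pochhammer (- b - of_nat m) k * pochhammer t k
            * pochhammer (c - a - of_nat m - t) (m - k)
            / (pochhammer (c - a - of_nat m) m * pochhammer (c - b - of_nat m) k * fact k)
            * hyp_term ((- of_nat k) # b # map (\<lambda>i. f i + of_nat (mm i)) [0..<r])
                       ((b + of_nat m - of_nat k + 1) # map f [0..<r]) k)"

end

theory Submission
  imports Defs "HOL-Computational_Algebra.Formal_Power_Series"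
begin

text \<open>Put A = c - a - m and B = c - b - m, so that c - a - b - m = B - a. A Sheppard-type
  transformation (Chu-Vandermonde applied twice) turns the k-th term of Qhat into
  (-1)^k C_k (b)_k / (A)_m times the sum over l = k..m of
  binomial(m-k, l-k) (a)_l (t)_l (A - t)_(m-l) / (B)_l.
  After exchanging the sums over k and l, the coefficient of the l-th such product is
  the sum over k <= l of (-1)^k C_k (b)_k binomial(m-k, l-k); expanding C_k and evaluating
  the inner sums by the binomial theorem for rising factorials gives
  (-1)^l (-b-m)_l / l! times the (r+2)F(r+1) of Phat. The parameters f enter only through
  the ratios p_j = prod_i (f_i + m_i)_j / (f_i)_j, and the identity holds for arbitrary p_j.\<close>

lemma sum_triangle_swap:
  fixes g :: "nat \<Rightarrow> nat \<Rightarrow> 'a::comm_monoid_add"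
  shows "(\<Sum>k\<le>m. \<Sum>l\<in>{k..m}. g k l) = (\<Sum>l\<le>m. \<Sum>k\<le>l. g k l)"
proof -
  have "(\<Sum>k\<le>m. \<Sum>l\<in>{l. l \<in> {..m} \<and> k \<le> l}. g k l)
      = (\<Sum>l\<le>m. \<Sum>k\<in>{k. k \<in> {..m} \<and> k \<le> l}. g k l)"
    by (rule sum.swap_restrict) auto
  moreover have "{l. l \<in> {..m} \<and> k \<le> l} = {k..m}" for k by auto
  moreover have "{k. k \<in> {..m} \<and> k \<le> l} = {..l}" if "l \<le> m" for l using that by auto
  ultimately show ?thesis by (auto intro: sum.cong)
qed

lemma pochhammer_minus_of_nat:
  "pochhammer (- of_nat n :: 'a::field_char_0) i = (-1)^i * fact i * of_nat (n choose i)"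
  by (simp add: binomial_gbinomial gbinomial_pochhammer)

lemma pochhammer_minus_of_nat_div_fact:
  assumes "i \<le> n"
  shows "pochhammer (- of_nat n :: 'a::field_char_0) i / fact n = (-1)^i / fact (n - i)"
  using assms by (simp add: pochhammer_minus_of_nat binomial_fact)

lemma Chu_Vandermonde:
  fixes a c :: "'a::field_char_0"
  assumes "n \<le> N" and "pochhammer c n \<noteq> 0"
  shows "(\<Sum>k\<le>N. pochhammer a k * pochhammer (- of_nat n) k / (fact k * pochhammer c k))
     = pochhammer (c - a) n / pochhammer c n"
proof -
  have "(\<Sum>k\<le>N. pochhammer a k * pochhammer (- of_nat n) k / (fact k * pochhammer c k))
      = (\<Sum>k\<le>n. pochhammer a k * pochhammer (- of_nat n) k / (fact k * pochhammer c k))"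
    using assms(1) by (intro sum.mono_neutral_right) (auto simp: pochhammer_of_nat_eq_0_lemma)
  also have "\<dots> = pochhammer (c - a) n / pochhammer c n"
    using Vandermonde_pochhammer[of n c a] assms(2)
    by (auto simp: pochhammer_eq_0_iff atMost_atLeast0)
  finally show ?thesis .
qed

lemma sum_pochhammer_minus_of_nat_shift:
  fixes g :: "nat \<Rightarrow> 'a::field_char_0"
  assumes "i \<le> N"
  shows "(\<Sum>j\<le>N. pochhammer (- of_nat j) i / fact j * g j)
       = (-1)^i * (\<Sum>s\<le>N - i. g (i + s) / fact s)"
proof -
  have "(\<Sum>j\<le>N. pochhammer (- of_nat j) i / fact j * g j)
      = (\<Sum>j\<in>{i..N}. pochhammer (- of_nat j) i / fact j * g j)"
    by (intro sum.mono_neutral_right) (auto simp: pochhammer_of_nat_eq_0_lemma)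
  also have "\<dots> = (\<Sum>s\<le>N - i. pochhammer (- of_nat (i + s)) i / fact (i + s) * g (i + s))"
    using assms by (simp add: sum.atLeastAtMost_shift_0 atLeast0AtMost)
  also have "\<dots> = (\<Sum>s\<le>N - i. (-1)^i / fact s * g (i + s))"
  proof -
    have "pochhammer (- of_nat (i + s)) i / fact (i + s) = ((-1)^i / fact s :: 'a)" for s
      using pochhammer_minus_of_nat_div_fact[of i "i + s"] by simp
    then show ?thesis by (simp only:)
  qed
  also have "\<dots> = (-1)^i * (\<Sum>s\<le>N - i. g (i + s) / fact s)"
    by (simp add: sum_distrib_left)
  finally show ?thesis .
qed

lemma Chu_Vandermonde_shifted:
  fixes t A :: "'a::field_char_0"
  assumes iN: "i \<le> N" and nz: "pochhammer A N \<noteq> 0"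
  shows "(\<Sum>j\<le>N. pochhammer (- of_nat N) j * pochhammer t j * pochhammer (- of_nat j) i
            / (fact j * pochhammer A j))
       = (-1)^i * pochhammer (- of_nat N) i * pochhammer t i * pochhammer (A - t) (N - i)
           / pochhammer A N"
proof -
  let ?c = "pochhammer (- of_nat N) i * pochhammer t i / pochhammer A i"
  have split_A: "pochhammer A N = pochhammer A i * pochhammer (A + of_nat i) (N - i)"
    using pochhammer_product'[of A i "N - i"] iN by simp
  then have nz_shift: "pochhammer (A + of_nat i) (N - i) \<noteq> 0"
    using nz by simp
  have "(\<Sum>j\<le>N. pochhammer (- of_nat N) j * pochhammer t j * pochhammer (- of_nat j) i
            / (fact j * pochhammer A j))
      = (\<Sum>j\<le>N. pochhammer (- of_nat j) i / fact j
            * (pochhammer (- of_nat N) j * pochhammer t j / pochhammer A j))"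
    by (simp add: field_simps)
  also have "\<dots> = (-1)^i * (\<Sum>s\<le>N - i. pochhammer (- of_nat N) (i + s) * pochhammer t (i + s)
            / pochhammer A (i + s) / fact s)"
    using iN by (rule sum_pochhammer_minus_of_nat_shift)
  also have "\<dots> = (-1)^i * (\<Sum>s\<le>N - i. ?c * (pochhammer (t + of_nat i) s
            * pochhammer (- of_nat (N - i)) s / (fact s * pochhammer (A + of_nat i) s)))"
  proof (intro sum.cong refl arg_cong2[where f = "(*)"])
    fix s assume "s \<in> {..N - i}"
    then have "pochhammer A (i + s) \<noteq> 0"
      using pochhammer_neq_0_mono[OF nz, of "i + s"] iN by simp
    moreover have "pochhammer (- of_nat N :: 'a) (i + s)
        = pochhammer (- of_nat N) i * pochhammer (- of_nat (N - i)) s"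
      using iN by (simp add: pochhammer_product' of_nat_diff)
    ultimately show "pochhammer (- of_nat N) (i + s) * pochhammer t (i + s) / pochhammer A (i + s) / fact s
        = ?c * (pochhammer (t + of_nat i) s * pochhammer (- of_nat (N - i)) s
            / (fact s * pochhammer (A + of_nat i) s))"
      by (simp only: pochhammer_product'[of t] pochhammer_product'[of A]) (simp add: field_simps)
  qed
  also have "\<dots> = (-1)^i * ?c * (pochhammer (A - t) (N - i) / pochhammer (A + of_nat i) (N - i))"
    unfolding sum_distrib_left[symmetric] Chu_Vandermonde[OF order_refl nz_shift] by (simp add: mult.assoc)
  also have "\<dots> = (-1)^i * pochhammer (- of_nat N) i * pochhammer t i * pochhammer (A - t) (N - i)
           / pochhammer A N"
    by (simp add: split_A)
  finally show ?thesis .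
qed

lemma Sheppard_transformation:
  fixes x t A B :: "'a::field_char_0"
  assumes nz_A: "pochhammer A N \<noteq> 0" and nz_B: "pochhammer B N \<noteq> 0"
  shows "(\<Sum>j\<le>N. pochhammer (- of_nat N) j * pochhammer t j * pochhammer (B - x) j
            / (fact j * pochhammer A j * pochhammer B j))
       = (\<Sum>i\<le>N. of_nat (N choose i) * pochhammer x i * pochhammer t i
            * pochhammer (A - t) (N - i) / pochhammer B i) / pochhammer A N"
proof -
  let ?u = "\<lambda>j. pochhammer (- of_nat N) j * pochhammer t j / (fact j * pochhammer A j)"
  let ?v = "\<lambda>i. pochhammer x i / (fact i * pochhammer B i)"
  have expand: "pochhammer (B - x) j / pochhammer B j
      = (\<Sum>i\<le>N. ?v i * pochhammer (- of_nat j) i)" if "j \<le> N" for j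
    using Chu_Vandermonde[OF that pochhammer_neq_0_mono[OF nz_B that], of x]
    by (simp add: field_simps)
  have "(\<Sum>j\<le>N. pochhammer (- of_nat N) j * pochhammer t j * pochhammer (B - x) j
            / (fact j * pochhammer A j * pochhammer B j))
      = (\<Sum>j\<le>N. ?u j * (pochhammer (B - x) j / pochhammer B j))"
    by (simp add: field_simps)
  also have "\<dots> = (\<Sum>j\<le>N. \<Sum>i\<le>N. ?v i * (?u j * pochhammer (- of_nat j) i))"
    by (rule sum.cong) (simp_all add: expand sum_distrib_left ac_simps)
  also have "\<dots> = (\<Sum>i\<le>N. ?v i * (\<Sum>j\<le>N. ?u j * pochhammer (- of_nat j) i))"
    by (subst sum.swap) (simp add: sum_distrib_left)
  also have "\<dots> = (\<Sum>i\<le>N. ?v i * ((-1)^i * pochhammer (- of_nat N) i * pochhammer t i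
                    * pochhammer (A - t) (N - i) / pochhammer A N))"
    using Chu_Vandermonde_shifted[OF _ nz_A, of _ t]
    by (intro sum.cong) (simp_all add: field_simps)
  also have "\<dots> = (\<Sum>i\<le>N. of_nat (N choose i) * pochhammer x i * pochhammer t i
            * pochhammer (A - t) (N - i) / pochhammer B i) / pochhammer A N"
    by (simp add: sum_divide_distrib pochhammer_minus_of_nat field_simps)
  finally show ?thesis .
qed

lemma sum_pochhammer_binomial_diagonal:
  fixes \<beta> :: "'a::field_char_0"
  assumes LM: "L \<le> M"
  shows "(\<Sum>s\<le>L. pochhammer \<beta> s / fact s * of_nat ((M - s) choose (L - s)))
       = pochhammer (\<beta> + of_nat M - of_nat L + 1) L / fact L"
proof -
  have binomial: "of_nat ((M - s) choose (L - s))
      = pochhammer (of_nat (M - L + 1) :: 'a) (L - s) / fact (L - s)" if "s \<le> L" for s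
  proof -
    have "of_nat (M - L + 1) = (of_nat (M - s) - of_nat (L - s) + 1 :: 'a)"
      using that LM by (simp add: of_nat_diff)
    then show ?thesis by (simp add: binomial_gbinomial gbinomial_pochhammer' add.commute)
  qed
  have "pochhammer (\<beta> + of_nat M - of_nat L + 1) L = pochhammer (\<beta> + of_nat (M - L + 1)) L"
    using LM by (simp add: of_nat_diff algebra_simps)
  also have "\<dots> = (\<Sum>s\<le>L. of_nat (L choose s) * pochhammer \<beta> s
                      * pochhammer (of_nat (M - L + 1)) (L - s))"
    by (rule pochhammer_binomial_sum)
  also have "\<dots> = fact L * (\<Sum>s\<le>L. pochhammer \<beta> s / fact s * of_nat ((M - s) choose (L - s)))"
    by (simp add: sum_distrib_left binomial binomial_fact field_simps)
  finally show ?thesis by simp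
qed

lemma sum_pochhammer_minus_binomial:
  fixes b :: "'a::field_char_0"
  assumes jl: "j \<le> l" and lm: "l \<le> m"
  shows "(\<Sum>k\<le>l. pochhammer (- of_nat k) j * pochhammer b k * of_nat ((m - k) choose (l - k)) / fact k)
       = (-1)^j * pochhammer b j
           * pochhammer (b + of_nat m - of_nat l + 1 + of_nat j) (l - j) / fact (l - j)"
proof -
  have "(\<Sum>k\<le>l. pochhammer (- of_nat k) j * pochhammer b k * of_nat ((m - k) choose (l - k)) / fact k)
      = (\<Sum>k\<le>l. pochhammer (- of_nat k) j / fact k * (pochhammer b k * of_nat ((m - k) choose (l - k))))"
    by (simp add: field_simps)
  also have "\<dots> = (-1)^j * (\<Sum>s\<le>l - j. pochhammer b (j + s)
                      * of_nat ((m - (j + s)) choose (l - (j + s))) / fact s)"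
    using jl by (rule sum_pochhammer_minus_of_nat_shift)
  also have "\<dots> = (-1)^j * pochhammer b j * (\<Sum>s\<le>l - j. pochhammer (b + of_nat j) s / fact s
                      * of_nat ((m - j - s) choose (l - j - s)))"
    unfolding pochhammer_product' diff_diff_left by (simp add: sum_distrib_left mult_ac)
  also have "\<dots> = (-1)^j * pochhammer b j
           * pochhammer (b + of_nat m - of_nat l + 1 + of_nat j) (l - j) / fact (l - j)"
    using sum_pochhammer_binomial_diagonal[of "l - j" "m - j" "b + of_nat j"] jl lm
    by (simp add: of_nat_diff algebra_simps)
  finally show ?thesis .
qed

lemma pochhammer_reflection_split:
  fixes b :: "'a::field_char_0" and j l m :: nat
  defines "\<beta> \<equiv> b + of_nat m - of_nat l + 1"
  assumes jl: "j \<le> l" and nz: "pochhammer \<beta> j \<noteq> 0"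
  shows "(-1)^l * pochhammer (- b - of_nat m) l / fact l * pochhammer (- of_nat l) j / pochhammer \<beta> j
       = (-1)^j * pochhammer (\<beta> + of_nat j) (l - j) / fact (l - j)"
proof -
  have "(-1)^l * pochhammer (- b - of_nat m) l = pochhammer \<beta> l"
    using pochhammer_minus'[of "b + of_nat m" l] by (simp add: \<beta>_def)
  also have "\<dots> = pochhammer \<beta> j * pochhammer (\<beta> + of_nat j) (l - j)"
    using pochhammer_product'[of \<beta> j "l - j"] jl by simp
  finally show ?thesis
    using pochhammer_minus_of_nat_div_fact[of j l, where 'a='a] jl nz by (simp add: field_simps)
qed

lemma hypergeometric_binomial_convolution:
  fixes b :: "'a::field_char_0" and p :: "nat \<Rightarrow> 'a" and l m :: nat
  defines "\<beta> \<equiv> b + of_nat m - of_nat l + 1"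
  assumes lm: "l \<le> m" and nz: "\<forall>j\<le>l. pochhammer \<beta> j \<noteq> 0"
  shows "(\<Sum>k\<le>l. (\<Sum>j\<le>k. pochhammer (- of_nat k) j * p j / fact j)
              * pochhammer b k * of_nat ((m - k) choose (l - k)) / fact k)
       = (-1)^l * pochhammer (- b - of_nat m) l / fact l
         * (\<Sum>j\<le>l. pochhammer (- of_nat l) j * pochhammer b j * p j / (fact j * pochhammer \<beta> j))"
proof -
  let ?h = "\<lambda>k j. pochhammer (- of_nat k) j * pochhammer b k * of_nat ((m - k) choose (l - k)) / fact k"
  have extend: "(\<Sum>j\<le>k. pochhammer (- of_nat k) j * p j / fact j)
      = (\<Sum>j\<le>l. pochhammer (- of_nat k) j * p j / fact j)" if "k \<le> l" for k
    using that by (intro sum.mono_neutral_left) (auto simp: pochhammer_of_nat_eq_0_lemma)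
  have "(\<Sum>k\<le>l. (\<Sum>j\<le>k. pochhammer (- of_nat k) j * p j / fact j)
              * pochhammer b k * of_nat ((m - k) choose (l - k)) / fact k)
      = (\<Sum>k\<le>l. \<Sum>j\<le>l. p j / fact j * ?h k j)"
    by (intro sum.cong refl)
      (simp only: atMost_iff extend, simp add: sum_distrib_left divide_inverse mult_ac)
  also have "\<dots> = (\<Sum>j\<le>l. p j / fact j * (\<Sum>k\<le>l. ?h k j))"
    by (subst sum.swap) (simp add: sum_distrib_left)
  also have "\<dots> = (\<Sum>j\<le>l. pochhammer b j * p j / fact j
       * ((-1)^j * pochhammer (\<beta> + of_nat j) (l - j) / fact (l - j)))"
    using sum_pochhammer_minus_binomial[OF _ lm, of _ b] by (simp add: \<beta>_def mult_ac)
  also have "\<dots> = (\<Sum>j\<le>l. pochhammer b j * p j / fact j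
       * ((-1)^l * pochhammer (- b - of_nat m) l / fact l * pochhammer (- of_nat l) j / pochhammer \<beta> j))"
    by (intro sum.cong refl) (simp only: atMost_iff nz[rule_format] not_False_eq_True
        pochhammer_reflection_split[where b = b and l = l and m = m, folded \<beta>_def, symmetric])
  also have "\<dots> = (-1)^l * pochhammer (- b - of_nat m) l / fact l
         * (\<Sum>j\<le>l. pochhammer (- of_nat l) j * pochhammer b j * p j / (fact j * pochhammer \<beta> j))"
    by (simp add: sum_distrib_left divide_inverse mult_ac)
  finally show ?thesis .
qed

lemma hyp_term_Sheppard:
  fixes x t A B :: complex
  assumes "pochhammer A N \<noteq> 0" and "pochhammer B N \<noteq> 0"
  shows "hyp_term [- of_nat N, t, B - x] [A, B] N
       = (\<Sum>i\<le>N. of_nat (N choose i) * pochhammer x i * pochhammer t i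
            * pochhammer (A - t) (N - i) / pochhammer B i) / pochhammer A N"
  unfolding hyp_term_def Sheppard_transformation[OF assms, symmetric]
  by (intro sum.cong refl) (simp add: field_simps)

lemma hyp_term_Sheppard_shifted:
  fixes a t A B :: complex
  assumes km: "k \<le> m" and nz_A: "pochhammer A m \<noteq> 0" and nz_B: "pochhammer B m \<noteq> 0"
  shows "pochhammer a k * pochhammer t k / (pochhammer A k * pochhammer B k)
       * hyp_term [- of_nat m + of_nat k, t + of_nat k, B - a] [A + of_nat k, B + of_nat k] (m - k)
     = (\<Sum>l\<in>{k..m}. of_nat ((m - k) choose (l - k)) * pochhammer a l * pochhammer t l
          * pochhammer (A - t) (m - l) / pochhammer B l) / pochhammer A m"
proof -
  have split_A: "pochhammer A m = pochhammer A k * pochhammer (A + of_nat k) (m - k)"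
    and split_B: "pochhammer B m = pochhammer B k * pochhammer (B + of_nat k) (m - k)"
    using pochhammer_product'[of _ k "m - k"] km by simp_all
  have "hyp_term [- of_nat m + of_nat k, t + of_nat k, B - a] [A + of_nat k, B + of_nat k] (m - k)
      = hyp_term [- of_nat (m - k), t + of_nat k, (B + of_nat k) - (a + of_nat k)]
                 [A + of_nat k, B + of_nat k] (m - k)"
    using km by (simp add: of_nat_diff)
  also have "\<dots> = (\<Sum>i\<le>m - k. of_nat ((m - k) choose i) * pochhammer (a + of_nat k) i
          * pochhammer (t + of_nat k) i * pochhammer (A - t) (m - k - i)
          / pochhammer (B + of_nat k) i) / pochhammer (A + of_nat k) (m - k)"
    using hyp_term_Sheppard[where N = "m - k" and A = "A + of_nat k" and B = "B + of_nat k"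
        and x = "a + of_nat k" and t = "t + of_nat k"] nz_A nz_B
    by (simp add: split_A split_B)
  finally have series: "hyp_term [- of_nat m + of_nat k, t + of_nat k, B - a] [A + of_nat k, B + of_nat k] (m - k)
      = \<dots>" .
  have "pochhammer a k * pochhammer t k / (pochhammer A k * pochhammer B k)
       * hyp_term [- of_nat m + of_nat k, t + of_nat k, B - a] [A + of_nat k, B + of_nat k] (m - k)
     = (\<Sum>i\<le>m - k. of_nat ((m - k) choose i) * (pochhammer a k * pochhammer (a + of_nat k) i)
          * (pochhammer t k * pochhammer (t + of_nat k) i) * pochhammer (A - t) (m - k - i)
          / (pochhammer B k * pochhammer (B + of_nat k) i)) / pochhammer A m"
    unfolding series sum_divide_distrib sum_distrib_left
    using nz_A nz_B by (intro sum.cong refl) (simp add: split_A split_B field_simps)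
  also have "\<dots> = (\<Sum>i\<le>m - k. of_nat ((m - k) choose i) * pochhammer a (k + i) * pochhammer t (k + i)
          * pochhammer (A - t) (m - (k + i)) / pochhammer B (k + i)) / pochhammer A m"
    by (simp only: pochhammer_product' diff_diff_left)
  also have "\<dots> = (\<Sum>l\<in>{k..m}. of_nat ((m - k) choose (l - k)) * pochhammer a l * pochhammer t l
          * pochhammer (A - t) (m - l) / pochhammer B l) / pochhammer A m"
    using km by (simp add: sum.atLeastAtMost_shift_0 atLeast0AtMost)
  finally show ?thesis .
qed

lemma Qhat_Phat_identity_general:
  fixes a b t A B :: complex and p C G :: "nat \<Rightarrow> complex"
  assumes C: "\<And>k. C k = (-1)^k / fact k * (\<Sum>j\<le>k. pochhammer (- of_nat k) j * p j / fact j)"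
    and G: "\<And>l. G l = (\<Sum>j\<le>l. pochhammer (- of_nat l) j * pochhammer b j * p j
              / (fact j * pochhammer (b + of_nat m - of_nat l + 1) j))"
    and nz_A: "pochhammer A m \<noteq> 0" and nz_B: "pochhammer B m \<noteq> 0"
    and b_wd: "\<forall>k\<le>m. \<forall>j\<le>k. pochhammer (b + of_nat m - of_nat k + 1) j \<noteq> 0"
  shows "(\<Sum>k\<le>m. (-1)^k * C k * pochhammer a k * pochhammer b k * pochhammer t k
            / (pochhammer A k * pochhammer B k)
            * hyp_term [- of_nat m + of_nat k, t + of_nat k, B - a] [A + of_nat k, B + of_nat k] (m - k))
       = (\<Sum>k\<le>m. (-1)^k * pochhammer a k * pochhammer (- b - of_nat m) k * pochhammer t k
            * pochhammer (A - t) (m - k) / (pochhammer A m * pochhammer B k * fact k) * G k)"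
proof -
  let ?H = "\<lambda>k. hyp_term [- of_nat m + of_nat k, t + of_nat k, B - a] [A + of_nat k, B + of_nat k] (m - k)"
  let ?F = "\<lambda>l. pochhammer a l * pochhammer t l * pochhammer (A - t) (m - l) / pochhammer B l
                  / pochhammer A m"
  let ?w = "\<lambda>k l. (-1)^k * C k * pochhammer b k * of_nat ((m - k) choose (l - k))"
  have "(\<Sum>k\<le>m. (-1)^k * C k * pochhammer a k * pochhammer b k * pochhammer t k
            / (pochhammer A k * pochhammer B k) * ?H k)
      = (\<Sum>k\<le>m. (-1)^k * C k * pochhammer b k
            * (pochhammer a k * pochhammer t k / (pochhammer A k * pochhammer B k) * ?H k))"
    by (simp only: divide_inverse mult_ac)
  also have "\<dots> = (\<Sum>k\<le>m. (-1)^k * C k * pochhammer b k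
            * ((\<Sum>l\<in>{k..m}. of_nat ((m - k) choose (l - k)) * pochhammer a l * pochhammer t l
                  * pochhammer (A - t) (m - l) / pochhammer B l) / pochhammer A m))"
    by (intro sum.cong refl) (simp only: atMost_iff hyp_term_Sheppard_shifted[OF _ nz_A nz_B])
  also have "\<dots> = (\<Sum>k\<le>m. \<Sum>l\<in>{k..m}. ?F l * ?w k l)"
    by (simp only: sum_divide_distrib sum_distrib_left divide_inverse mult_ac)
  also have "\<dots> = (\<Sum>l\<le>m. ?F l * (\<Sum>k\<le>l. ?w k l))"
    by (simp add: sum_triangle_swap sum_distrib_left)
  also have "\<dots> = (\<Sum>l\<le>m. ?F l * ((-1)^l * pochhammer (- b - of_nat m) l / fact l * G l))"
  proof (intro sum.cong refl arg_cong2[where f = "(*)"])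
    fix l assume "l \<in> {..m}"
    then show "(\<Sum>k\<le>l. ?w k l) = (-1)^l * pochhammer (- b - of_nat m) l / fact l * G l"
      using hypergeometric_binomial_convolution[of l m b p] b_wd
      by (simp add: C G mult_ac)
  qed
  also have "\<dots> = (\<Sum>k\<le>m. (-1)^k * pochhammer a k * pochhammer (- b - of_nat m) k * pochhammer t k
            * pochhammer (A - t) (m - k) / (pochhammer A m * pochhammer B k * fact k) * G k)"
    by (simp add: field_simps)
  finally show ?thesis .
qed

theorem corollary2:
  fixes r :: nat and mm :: "nat \<Rightarrow> nat" and f :: "nat \<Rightarrow> complex"
    and a b c :: complex
  defines "m \<equiv> (\<Sum>i<r. mm i)"
  assumes "r \<ge> 1"
    and "pochhammer (c - a - of_nat m) m \<noteq> 0"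
    and "pochhammer (c - b - of_nat m) m \<noteq> 0"
    and "pochhammer (1 + a + b - c) m \<noteq> 0"
    and f_wd: "\<forall>i<r. \<forall>j\<le>m. pochhammer (f i) j \<noteq> 0"
    and b_wd: "\<forall>k\<le>m. \<forall>j\<le>k. pochhammer (b + of_nat m - of_nat k + 1) j \<noteq> 0"
  shows "\<forall>t. Qhat r f mm a b c t = Phat r f mm a b c t"
proof
  fix t
  \<comment> \<open>The identity holds for any weights p.\<close>
  define p where "p j = prod_list (map (\<lambda>i. pochhammer (f i + of_nat (mm i)) j) [0..<r])
      / prod_list (map (\<lambda>i. pochhammer (f i) j) [0..<r])" for j
  have C: "Ccoef r f mm k = (-1)^k / fact k * (\<Sum>j\<le>k. pochhammer (- of_nat k) j * p j / fact j)" for k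
    unfolding Ccoef_def hyp_term_def p_def by (simp add: comp_def)
  have G: "hyp_term ((- of_nat l) # b # map (\<lambda>i. f i + of_nat (mm i)) [0..<r])
                    ((b + of_nat m - of_nat l + 1) # map f [0..<r]) l
     = (\<Sum>j\<le>l. pochhammer (- of_nat l) j * pochhammer b j * p j
              / (fact j * pochhammer (b + of_nat m - of_nat l + 1) j))" for l
    unfolding hyp_term_def p_def by (intro sum.cong refl) (simp add: comp_def field_simps)
  have third_parameter: "c - a - b - of_nat m = (c - b - of_nat m) - a" by simp
  show "Qhat r f mm a b c t = Phat r f mm a b c t"
    unfolding Qhat_def Phat_def Let_def m_def[symmetric] third_parameter
    by (rule Qhat_Phat_identity_general[OF C G assms(3,4) b_wd])
qed

end
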